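(* For every level $j\in\{2,\dots,K\}$ and every $z\in[0,1]$, the marginal generating function of the number of waiting level-$j$ clients under $P$ satisfies $$\sum_{\mathbf n\in\mathbb N_0^K}P(\mathbf n)\,z^{n_j}=\frac{1-\sigma_j}{\eta_+(z)-\sigma_j}=\frac{1-\sigma_j}{r_j}\cdot\frac{\sigma_j-\eta_-(z)}{1-\sigma_j z}=\frac{1-\sigma_j}{1-\sigma_j z}\cdot\frac{1-z\,\eta_-(z)}{1-\eta_-(z)},$$ where $\eta_\pm(z)=\tfrac12\big[1+\sigma_j-r_jz\pm\sqrt{(1+\sigma_j-r_jz)^2-4\sigma_{j-1}}\big]$. That is, the level-$j$ marginal coincides with the low-priority marginal of a two-level problem with high-level intensity $\sigma_{j-1}$ and low-level intensity $r_j$ (levels below $j$ discarded).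
   Context: Fix integers $c\ge 1$, $K\ge 2$ and reals $r_1,\dots,r_K>0$ with $r=\sum_{k=1}^K r_k<1$ (here $r_k=\lambda_k/(c\mu)$ for an M/M/$c$ queue with $K$ non-preemptive priority levels, level 1 the highest). Write $\sigma_k=\sum_{j=1}^k r_j$, $\mathbf e_\kappa$ for the standard unit vectors of $\mathbb Z^K$, $\delta_{ij}$ for the Kronecker delta. Consider the equations for $(p_{\mathbf n})_{\mathbf n\in\mathbb N_0^K}$, with the convention $p_{\mathbf n}=0$ if some component of $\mathbf n$ is negative: $$(1+r)p_{\mathbf n}=\Big(\prod_{j=1}^K\delta_{0n_j}\Big)p_{\mathbf n}+\sum_{\kappa=1}^K\Big[r_\kappa p_{\mathbf n-\mathbf e_\kappa}+\Big(\prod_{j=1}^{\kappa-1}\delta_{0n_j}\Big)p_{\mathbf n+\mathbf e_\kappa}\Big],\quad \mathbf n\in\mathbb N_0^K .$$ These are the stationary balance equations for the states in which all $c$ servers are busy and $n_\kappa$ clients of level $\kappa$ wait in the queue; their nonnegative summable solutions form a one-dimensional cone, and $P$ denotes the unique solution with $\sum_{\mathbf n}P(\mathbf n)=1$. *)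

theory Defs
  imports "HOL-Analysis.Analysis"
begin

text \<open>States: vectors n in N_0^K, represented as functions nat => nat
  with components indexed 1..K and all other components 0.\<close>
definition states :: "nat \<Rightarrow> (nat \<Rightarrow> nat) set" where
  "states K = {n. \<forall>i. (i < 1 \<or> K < i) \<longrightarrow> n i = 0}"

definition sigma :: "(nat \<Rightarrow> real) \<Rightarrow> nat \<Rightarrow> real" where
  "sigma r k = (\<Sum>j=1..k. r j)"

text \<open>p evaluated at n - e_kappa, with the convention p = 0 at negative components.\<close>
definition p_minus :: "((nat \<Rightarrow> nat) \<Rightarrow> real) \<Rightarrow> (nat \<Rightarrow> nat) \<Rightarrow> nat \<Rightarrow> real" where
  "p_minus p n \<kappa> = (if n \<kappa> = 0 then 0 else p (n(\<kappa> := n \<kappa> - 1)))"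

definition p_plus :: "((nat \<Rightarrow> nat) \<Rightarrow> real) \<Rightarrow> (nat \<Rightarrow> nat) \<Rightarrow> nat \<Rightarrow> real" where
  "p_plus p n \<kappa> = p (n(\<kappa> := n \<kappa> + 1))"

definition balance :: "nat \<Rightarrow> (nat \<Rightarrow> real) \<Rightarrow> ((nat \<Rightarrow> nat) \<Rightarrow> real) \<Rightarrow> bool" where
  "balance K r p \<longleftrightarrow> (\<forall>n\<in>states K.
     (1 + sigma r K) * p n =
       (\<Prod>j=1..K. (if n j = 0 then 1 else 0)) * p n
       + (\<Sum>\<kappa>=1..K. r \<kappa> * p_minus p n \<kappa>
            + (\<Prod>j=1..\<kappa>-1. (if n j = 0 then 1 else 0)) * p_plus p n \<kappa>))"

definition eta_plus :: "(nat \<Rightarrow> real) \<Rightarrow> nat \<Rightarrow> real \<Rightarrow> real" where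
  "eta_plus r j z = (1 + sigma r j - r j * z
      + sqrt ((1 + sigma r j - r j * z)^2 - 4 * sigma r (j - 1))) / 2"

definition eta_minus :: "(nat \<Rightarrow> real) \<Rightarrow> nat \<Rightarrow> real \<Rightarrow> real" where
  "eta_minus r j z = (1 + sigma r j - r j * z
      - sqrt ((1 + sigma r j - r j * z)^2 - 4 * sigma r (j - 1))) / 2"

end

theory Submission
  imports Defs
begin

text \<open>
  Multiplying the balance equations by a bounded weight w and summing over all states gives
  (1 + sigma_K) E w(n) = sum_k r_k E w(n + e_k) + E w(serve n), where serve n removes one client
  of the highest-priority nonempty level. For weights that depend on n only through the pair
  (h, n_j) with h = n_1 + ... + n_(j-1), the levels j+1, ..., K drop out and the pair behaves
  like a two-level queue with intensities sigma_(j-1) and r_j.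

  Weights depending on n_j alone give the throughput identity
  r_j P(n_j = N) = P(h = 0, n_j = N + 1), which identifies the departure term of the
  generating function F(z) = E z^(n_j) as r_j F(z). The weights 1[h = m] z^(n_j) give a
  second-order recurrence H(m+2) = (eta_+ + eta_-) H(m+1) - eta_+ eta_- H(m) for the summands
  of F = sum_m H(m); as eta_+ >= 1 > eta_-, its only summable solutions are geometric with
  ratio eta_-, and the equation at m = 0 becomes F(z) (eta_+(z) - sigma_j) = P(h = 0, n_j = 0).
  At z = 1 both F and eta_+ equal 1, which evaluates this constant as 1 - sigma_j.
\<close>

lemma has_sum_sum:
  fixes f :: "'i \<Rightarrow> 'a \<Rightarrow> 'b::topological_comm_monoid_add"
  assumes "finite I" "\<And>i. i \<in> I \<Longrightarrow> (f i has_sum s i) A"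
  shows "((\<lambda>x. \<Sum>i\<in>I. f i x) has_sum (\<Sum>i\<in>I. s i)) A"
  using assms
proof (induction I rule: finite_induct)
  case (insert i I)
  then show ?case by (simp add: has_sum_add)
qed simp

lemma summable_on_bounded_weight:
  fixes p w :: "'a \<Rightarrow> real"
  assumes "p summable_on S" "\<And>x. x \<in> S \<Longrightarrow> 0 \<le> p x" "A \<subseteq> S" "\<And>x. x \<in> A \<Longrightarrow> \<bar>w x\<bar> \<le> 1"
  shows "(\<lambda>x. w x * p x) summable_on A"
proof -
  have "p summable_on A" using assms(1,3) by (rule summable_on_subset)
  then have "(\<lambda>x. norm (w x * p x)) summable_on A"
  proof (rule Infinite_Sum.abs_summable_on_comparison_test')
    show "norm (w x * p x) \<le> p x" if "x \<in> A" for x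
    proof -
      have "norm (w x * p x) = \<bar>w x\<bar> * p x" using assms(2,3) that by (auto simp: abs_mult)
      also have "\<dots> \<le> 1 * p x" using assms(2-4) that by (intro mult_right_mono) auto
      finally show ?thesis by simp
    qed
  qed
  then show ?thesis by (rule summable_on_iff_abs_summable_on_real[THEN iffD2])
qed

lemma has_sum_fibres:
  fixes f :: "'a \<Rightarrow> real" and \<phi> :: "'a \<Rightarrow> 'b"
  assumes "f summable_on A"
  shows "((\<lambda>y. infsum (\<lambda>x. if \<phi> x = y then f x else 0) A) has_sum infsum f A) UNIV"
proof (rule has_sum_Sigma')
  have "inj_on (\<lambda>x. (\<phi> x, x)) A" by (auto simp: inj_on_def)
  moreover have "(\<lambda>x. (\<phi> x, x)) ` A = Sigma UNIV (\<lambda>y. {x \<in> A. \<phi> x = y})" by auto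
  ultimately show "((\<lambda>p. f (snd p)) has_sum infsum f A) (Sigma UNIV (\<lambda>y. {x \<in> A. \<phi> x = y}))"
    using has_sum_reindex[of "\<lambda>x. (\<phi> x, x)" A "f \<circ> snd"] assms by (simp add: o_def)
  show "((\<lambda>x. f (snd (y, x))) has_sum infsum (\<lambda>x. if \<phi> x = y then f x else 0) A) {x \<in> A. \<phi> x = y}" for y
  proof -
    have "infsum (\<lambda>x. if \<phi> x = y then f x else 0) A = infsum f {x \<in> A. \<phi> x = y}"
      by (rule infsum_cong_neutral) auto
    moreover have "f summable_on {x \<in> A. \<phi> x = y}" using assms by (rule summable_on_subset) auto
    ultimately show ?thesis by simp
  qed
qed

text \<open>The defect h (m + 1) - b h m grows like a^m, so it can only tend to 0 by vanishing.\<close>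
lemma summable_recurrence_geometric:
  fixes h :: "nat \<Rightarrow> real"
  assumes "summable h" and "1 \<le> a"
    and rec: "\<And>m. h (Suc (Suc m)) = (a + b) * h (Suc m) - a * b * h m"
  shows "h m = b ^ m * h 0"
proof -
  define e where "e m = h (Suc m) - b * h m" for m
  have "e (Suc m) = a * e m" for m by (simp add: e_def rec algebra_simps)
  then have e_pow: "e m = a ^ m * e 0" for m by (induction m) simp_all
  have "h \<longlonglongrightarrow> 0" using assms(1) by (rule summable_LIMSEQ_zero)
  then have "e \<longlonglongrightarrow> 0 - b * 0"
    unfolding e_def by (intro tendsto_intros LIMSEQ_Suc)
  then have "(\<lambda>m. \<bar>e m\<bar>) \<longlonglongrightarrow> 0" by (simp add: tendsto_rabs_zero)
  moreover have "\<bar>e 0\<bar> \<le> \<bar>e m\<bar>" for m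
    using e_pow[of m] one_le_power[OF assms(2), of m] mult_right_mono[of 1 "a ^ m" "\<bar>e 0\<bar>"]
    by (simp add: abs_mult)
  ultimately have "\<bar>e 0\<bar> \<le> 0" by (intro LIMSEQ_le_const) auto
  then have "h (Suc m) = b * h m" for m using e_pow[of m] by (simp add: e_def)
  then show ?thesis by (induction m) simp_all
qed

lemma quadratic_roots:
  fixes c s :: real
  assumes s: "0 \<le> s" "s < 1" and c: "1 + s \<le> c"
  defines "a \<equiv> (c + sqrt (c\<^sup>2 - 4 * s)) / 2" and "b \<equiv> (c - sqrt (c\<^sup>2 - 4 * s)) / 2"
  shows "a + b = c" "a * b = s" "1 \<le> a" "0 \<le> b" "b < 1"
proof -
  let ?q = "sqrt (c\<^sup>2 - 4 * s)"
  have "(1 + s)\<^sup>2 \<le> c\<^sup>2" using s c by (intro power_mono) auto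
  then have disc: "(1 - s)\<^sup>2 \<le> c\<^sup>2 - 4 * s" by (simp add: power2_eq_square algebra_simps)
  then have "sqrt ((1 - s)\<^sup>2) \<le> ?q" by (rule real_sqrt_le_mono)
  then have q: "1 - s \<le> ?q" using s by simp
  have "?q\<^sup>2 = c\<^sup>2 - 4 * s" using disc by (intro real_sqrt_pow2) (smt (verit) zero_le_power2)
  then show "a * b = s" unfolding a_def b_def by (simp add: power2_eq_square algebra_simps)
  show "a + b = c" by (simp add: a_def b_def field_simps)
  show "1 \<le> a" using q c unfolding a_def by (simp add: field_simps)
  then have "b = s / a" using \<open>a * b = s\<close> by (simp add: field_simps)
  then show "0 \<le> b" "b < 1" using s \<open>1 \<le> a\<close> by (auto simp: divide_le_eq intro: le_less_trans)
qed

lemma pgf_closed_forms: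
  fixes a b \<sigma> \<rho> z :: real
  assumes sum: "a + b = 1 + \<sigma> - \<rho> * z" and prod: "a * b = \<sigma> - \<rho>"
    and a: "1 \<le> a" and b: "b < 1" and \<rho>: "0 < \<rho>" "\<rho> \<le> \<sigma>" and \<sigma>: "\<sigma> < 1" and z: "z \<le> 1"
  shows "(1 - \<sigma>) / (a - \<sigma>) = (1 - \<sigma>) / \<rho> * ((\<sigma> - b) / (1 - \<sigma> * z))"
    and "(1 - \<sigma>) / \<rho> * ((\<sigma> - b) / (1 - \<sigma> * z)) = (1 - \<sigma>) / (1 - \<sigma> * z) * ((1 - z * b) / (1 - b))"
proof -
  have "(a - \<sigma>) * (\<sigma> - b) = \<sigma> * (a + b) - a * b - \<sigma> * \<sigma>" by algebra
  then have i1: "(a - \<sigma>) * (\<sigma> - b) = \<rho> * (1 - \<sigma> * z)" unfolding sum prod by algebra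
  have "(\<sigma> - b) * (1 - b) = \<sigma> - \<sigma> * b - b + (a + b) * b - a * b" by algebra
  then have i2: "(\<sigma> - b) * (1 - b) = \<rho> * (1 - z * b)" unfolding sum prod by algebra
  have "\<sigma> * z \<le> \<sigma>" using \<rho> z by (intro mult_left_le) auto
  then have pos: "0 < a - \<sigma>" "0 < 1 - \<sigma> * z" "0 < 1 - b" using a b \<sigma> by auto
  have "(\<sigma> - b) / (1 - \<sigma> * z) = \<rho> / (a - \<sigma>)"
    using i1 pos by (simp add: frac_eq_eq mult.commute)
  then show "(1 - \<sigma>) / (a - \<sigma>) = (1 - \<sigma>) / \<rho> * ((\<sigma> - b) / (1 - \<sigma> * z))"
    using \<rho> by simp
  have "(\<sigma> - b) / \<rho> = (1 - z * b) / (1 - b)"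
    using i2 pos \<rho> by (simp add: frac_eq_eq mult.commute)
  moreover have "(1 - \<sigma>) / \<rho> * ((\<sigma> - b) / (1 - \<sigma> * z)) = (1 - \<sigma>) / (1 - \<sigma> * z) * ((\<sigma> - b) / \<rho>)"
    by simp
  ultimately show "(1 - \<sigma>) / \<rho> * ((\<sigma> - b) / (1 - \<sigma> * z))
      = (1 - \<sigma>) / (1 - \<sigma> * z) * ((1 - z * b) / (1 - b))"
    by simp
qed

definition incr :: "(nat \<Rightarrow> nat) \<Rightarrow> nat \<Rightarrow> nat \<Rightarrow> nat" where
  "incr n k = n(k := Suc (n k))"

definition decr :: "(nat \<Rightarrow> nat) \<Rightarrow> nat \<Rightarrow> nat \<Rightarrow> nat" where
  "decr n k = n(k := n k - 1)"

definition next_served :: "(nat \<Rightarrow> nat) \<Rightarrow> nat" where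
  "next_served n = (LEAST k. n k \<noteq> 0)"

text \<open>For the empty queue, next_served is the unspecified LEAST of an empty set; since that level
  is empty too, serve is then the identity.\<close>
definition serve :: "(nat \<Rightarrow> nat) \<Rightarrow> nat \<Rightarrow> nat" where
  "serve n = decr n (next_served n)"

definition empty_upto :: "nat \<Rightarrow> nat \<Rightarrow> (nat \<Rightarrow> nat) set" where
  "empty_upto K k = {n \<in> states K. \<forall>i\<in>{1..k}. n i = 0}"

definition served_from :: "nat \<Rightarrow> nat \<Rightarrow> (nat \<Rightarrow> nat) set" where
  "served_from K k = {n \<in> empty_upto K (k - 1). n k \<noteq> 0}"

lemma states_zero: "n \<in> states K \<Longrightarrow> n 0 = 0"
  by (simp add: states_def)

lemma incr_states: "n \<in> states K \<Longrightarrow> k \<in> {1..K} \<Longrightarrow> incr n k \<in> states K"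
  by (auto simp: states_def incr_def)

lemma decr_states: "n \<in> states K \<Longrightarrow> decr n k \<in> states K"
  by (auto simp: states_def decr_def)

lemma incr_apply: "incr n k i = (if i = k then Suc (n i) else n i)"
  by (simp add: incr_def)

lemma decr_apply: "decr n k i = (if i = k then n i - 1 else n i)"
  by (simp add: decr_def)

lemma p_minus_incr: "p_minus p (incr n k) k = p n"
  by (simp add: p_minus_def incr_def)

lemma p_plus_incr: "p_plus p n k = p (incr n k)"
  by (simp add: p_plus_def incr_def)

lemma decr_incr [simp]: "decr (incr n k) k = n"
  by (simp add: decr_def incr_def)

lemma incr_decr: "n k \<noteq> 0 \<Longrightarrow> incr (decr n k) k = n"
  by (auto simp: decr_def incr_def)

lemma decr_self: "n k = 0 \<Longrightarrow> decr n k = n"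
  by (auto simp: decr_def)

lemma serve_states: "n \<in> states K \<Longrightarrow> serve n \<in> states K"
  by (simp add: serve_def decr_states)

lemma serve_served_from: "n \<in> served_from K k \<Longrightarrow> serve n = decr n k"
proof -
  assume n: "n \<in> served_from K k"
  then have "n i = 0" if "i < k" for i
    using that states_zero[of n K] by (cases "i = 0") (auto simp: served_from_def empty_upto_def)
  with n have "next_served n = k"
    unfolding next_served_def served_from_def by (intro Least_equality) (auto simp: not_less[symmetric])
  then show ?thesis by (simp add: serve_def)
qed

lemma serve_empty_upto: "n \<in> empty_upto K K \<Longrightarrow> serve n = n"
proof -
  assume "n \<in> empty_upto K K"
  then have "n i = 0" for i
    by (cases "i = 0 \<or> K < i") (auto simp: empty_upto_def states_def)
  then show ?thesis by (simp add: serve_def decr_self)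
qed

lemma empty_upto_0: "empty_upto K 0 = states K"
  by (simp add: empty_upto_def)

lemma served_from_eq: "served_from K (Suc k) = empty_upto K k - empty_upto K (Suc k)"
  by (auto simp: served_from_def empty_upto_def atLeastAtMostSuc_conv)

lemma infsum_served_from:
  fixes f :: "(nat \<Rightarrow> nat) \<Rightarrow> real"
  assumes "f summable_on states K"
  shows "(\<Sum>\<kappa>=1..k. infsum f (served_from K \<kappa>)) = infsum f (states K) - infsum f (empty_upto K k)"
proof (induction k)
  case (Suc k)
  have "f summable_on empty_upto K k" for k
    using assms by (rule summable_on_subset) (auto simp: empty_upto_def)
  moreover have "empty_upto K (Suc k) \<subseteq> empty_upto K k" by (auto simp: empty_upto_def)
  ultimately show ?case using Suc by (simp add: served_from_eq infsum_Diff)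
qed (simp add: empty_upto_0)

lemma prod_indicator_zero:
  "finite A \<Longrightarrow> (\<Prod>i\<in>A. if n i = 0 then 1 else (0::real)) = (if \<forall>i\<in>A. n i = 0 then 1 else 0)"
  by (induction A rule: finite_induct) simp_all

locale stationary =
  fixes K :: nat and r :: "nat \<Rightarrow> real" and P :: "(nat \<Rightarrow> nat) \<Rightarrow> real"
  assumes balance: "balance K r P"
    and nonneg: "\<And>n. n \<in> states K \<Longrightarrow> 0 \<le> P n"
    and prob: "(P has_sum 1) (states K)"
begin

definition expect :: "((nat \<Rightarrow> nat) \<Rightarrow> real) \<Rightarrow> real" where
  "expect w = infsum (\<lambda>n. w n * P n) (states K)"

lemma summable_weighted:
  "A \<subseteq> states K \<Longrightarrow> (\<And>n. n \<in> A \<Longrightarrow> \<bar>w n\<bar> \<le> 1) \<Longrightarrow> (\<lambda>n. w n * P n) summable_on A"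
  using has_sum_imp_summable[OF prob] nonneg by (rule summable_on_bounded_weight)

lemma has_sum_expect:
  "(\<And>n. n \<in> states K \<Longrightarrow> \<bar>w n\<bar> \<le> 1) \<Longrightarrow> ((\<lambda>n. w n * P n) has_sum expect w) (states K)"
  unfolding expect_def by (rule has_sum_infsum, rule summable_weighted) auto

lemma has_sum_arrivals:
  assumes \<kappa>: "\<kappa> \<in> {1..K}" and w: "\<And>n. n \<in> states K \<Longrightarrow> \<bar>w n\<bar> \<le> 1"
  shows "((\<lambda>n. w n * p_minus P n \<kappa>) has_sum expect (\<lambda>n. w (incr n \<kappa>))) (states K)"
proof -
  let ?T = "{n \<in> states K. n \<kappa> \<noteq> 0}"
  have "((\<lambda>n. w (incr n \<kappa>) * P n) has_sum expect (\<lambda>n. w (incr n \<kappa>))) (states K)"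
    using w incr_states \<kappa> by (intro has_sum_expect) auto
  also have "?this \<longleftrightarrow> ((\<lambda>n. w n * p_minus P n \<kappa>) has_sum expect (\<lambda>n. w (incr n \<kappa>))) ?T"
    by (rule has_sum_reindex_bij_witness[where i = "\<lambda>n. decr n \<kappa>" and j = "\<lambda>n. incr n \<kappa>"])
      (use \<kappa> in \<open>auto simp: incr_states decr_states incr_decr incr_apply p_minus_incr\<close>)
  also have "\<dots> \<longleftrightarrow> ((\<lambda>n. w n * p_minus P n \<kappa>) has_sum expect (\<lambda>n. w (incr n \<kappa>))) (states K)"
    by (rule has_sum_cong_neutral) (auto simp: p_minus_def)
  finally show ?thesis .
qed

lemma has_sum_departures:
  assumes \<kappa>: "\<kappa> \<in> {1..K}" and w: "\<And>n. n \<in> states K \<Longrightarrow> \<bar>w n\<bar> \<le> 1"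
  shows "((\<lambda>n. w n * ((\<Prod>i=1..\<kappa>-1. if n i = 0 then 1 else 0) * p_plus P n \<kappa>)) has_sum
           infsum (\<lambda>n. w (serve n) * P n) (served_from K \<kappa>)) (states K)"
    (is "(?f has_sum ?s) _")
proof -
  have "((\<lambda>n. w (serve n) * P n) has_sum ?s) (served_from K \<kappa>)"
    using w serve_states by (intro has_sum_infsum summable_weighted)
      (auto simp: served_from_def empty_upto_def)
  also have "?this \<longleftrightarrow> ((\<lambda>n. w n * P (incr n \<kappa>)) has_sum ?s) (empty_upto K (\<kappa> - 1))"
    by (rule has_sum_reindex_bij_witness[where i = "\<lambda>n. incr n \<kappa>" and j = "\<lambda>n. decr n \<kappa>"])
      (use \<kappa> in \<open>auto simp: served_from_def empty_upto_def incr_decr serve_served_from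
        incr_states decr_states incr_apply decr_apply\<close>)
  also have "\<dots> \<longleftrightarrow> (?f has_sum ?s) (states K)"
    by (rule has_sum_cong_neutral)
      (auto simp: empty_upto_def prod_indicator_zero p_plus_incr)
  finally show ?thesis .
qed

lemma has_sum_idle:
  assumes w: "\<And>n. n \<in> states K \<Longrightarrow> \<bar>w n\<bar> \<le> 1"
  shows "((\<lambda>n. w n * ((\<Prod>i=1..K. if n i = 0 then 1 else 0) * P n)) has_sum
           infsum (\<lambda>n. w (serve n) * P n) (empty_upto K K)) (states K)"
proof -
  have "((\<lambda>n. w (serve n) * P n) has_sum infsum (\<lambda>n. w (serve n) * P n) (empty_upto K K))
          (empty_upto K K)"
    using w serve_states by (intro has_sum_infsum summable_weighted) (auto simp: empty_upto_def)
  then show ?thesis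
    by (subst has_sum_cong_neutral[where T = "empty_upto K K"])
      (auto simp: empty_upto_def prod_indicator_zero serve_empty_upto)
qed

lemma expect_balance:
  assumes w: "\<And>n. n \<in> states K \<Longrightarrow> \<bar>w n\<bar> \<le> 1"
  shows "(1 + sigma r K) * expect w
           = (\<Sum>\<kappa>=1..K. r \<kappa> * expect (\<lambda>n. w (incr n \<kappa>))) + expect (\<lambda>n. w (serve n))"
proof -
  let ?f = "\<lambda>n. w (serve n) * P n"
  let ?idle = "\<lambda>k n. \<Prod>i=1..k. if n i = 0 then 1 else (0::real)"
  let ?rhs = "infsum ?f (empty_upto K K)
    + (\<Sum>\<kappa>=1..K. r \<kappa> * expect (\<lambda>n. w (incr n \<kappa>)) + infsum ?f (served_from K \<kappa>))"
  have "((\<lambda>n. w n * (?idle K n * P n) + (\<Sum>\<kappa>=1..K. r \<kappa> * (w n * p_minus P n \<kappa>)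
            + w n * (?idle (\<kappa> - 1) n * p_plus P n \<kappa>))) has_sum ?rhs) (states K)"
    using w by (intro has_sum_add has_sum_idle has_sum_sum has_sum_cmult_right
        has_sum_arrivals has_sum_departures) auto
  also have "?this \<longleftrightarrow> ((\<lambda>n. (1 + sigma r K) * (w n * P n)) has_sum ?rhs) (states K)"
  proof (rule has_sum_cong)
    fix n assume "n \<in> states K"
    with balance have bal: "(1 + sigma r K) * P n = ?idle K n * P n
        + (\<Sum>\<kappa>=1..K. r \<kappa> * p_minus P n \<kappa> + ?idle (\<kappa> - 1) n * p_plus P n \<kappa>)"
      unfolding balance_def by blast
    have "w n * (?idle K n * P n) + (\<Sum>\<kappa>=1..K. r \<kappa> * (w n * p_minus P n \<kappa>)
            + w n * (?idle (\<kappa> - 1) n * p_plus P n \<kappa>))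
          = w n * (?idle K n * P n
              + (\<Sum>\<kappa>=1..K. r \<kappa> * p_minus P n \<kappa> + ?idle (\<kappa> - 1) n * p_plus P n \<kappa>))"
      by (simp add: sum_distrib_left distrib_left mult.left_commute)
    also have "\<dots> = (1 + sigma r K) * (w n * P n)"
      by (simp only: bal[symmetric] mult.left_commute)
    finally show "w n * (?idle K n * P n) + (\<Sum>\<kappa>=1..K. r \<kappa> * (w n * p_minus P n \<kappa>)
            + w n * (?idle (\<kappa> - 1) n * p_plus P n \<kappa>)) = (1 + sigma r K) * (w n * P n)" .
  qed
  finally have "(1 + sigma r K) * expect w = ?rhs"
    using has_sum_cmult_right[OF has_sum_expect[OF w]] by (rule has_sum_unique[rotated])
  moreover have "infsum ?f (empty_upto K K) + (\<Sum>\<kappa>=1..K. infsum ?f (served_from K \<kappa>))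
                   = expect (\<lambda>n. w (serve n))"
    using infsum_served_from[of ?f K K] w serve_states
    by (simp add: expect_def summable_weighted)
  ultimately show ?thesis by (simp add: sum.distrib)
qed

end

lemma sum_split_at:
  fixes f :: "nat \<Rightarrow> real"
  assumes "j \<in> {1..K}"
  shows "(\<Sum>\<kappa>=1..K. f \<kappa>) = (\<Sum>\<kappa>=1..j-1. f \<kappa>) + f j + (\<Sum>\<kappa>\<in>{j<..K}. f \<kappa>)"
proof -
  have "{1..K} = insert j {1..j-1} \<union> {j<..K}" using assms by auto
  then have "(\<Sum>\<kappa>=1..K. f \<kappa>) = (\<Sum>\<kappa>\<in>insert j {1..j-1}. f \<kappa>) + (\<Sum>\<kappa>\<in>{j<..K}. f \<kappa>)"
    by (simp only:) (rule sum.union_disjoint, auto)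
  also have "(\<Sum>\<kappa>\<in>insert j {1..j-1}. f \<kappa>) = f j + (\<Sum>\<kappa>=1..j-1. f \<kappa>)"
    by (rule sum.insert) auto
  finally show ?thesis by simp
qed

lemma sigma_pred: "1 \<le> j \<Longrightarrow> sigma r j = sigma r (j - 1) + r j"
  unfolding sigma_def by (cases j) auto

lemma sigma_bounds:
  assumes "\<forall>k\<in>{1..K}. r k > 0" "j \<in> {1..K}"
  shows "0 \<le> sigma r (j - 1)" "sigma r j \<le> sigma r K"
proof -
  show "0 \<le> sigma r (j - 1)"
    using assms unfolding sigma_def by (intro sum_nonneg) (auto intro: less_imp_le)
  show "sigma r j \<le> sigma r K"
    using assms unfolding sigma_def by (intro sum_mono2) (auto intro: less_imp_le)
qed

lemma eta_roots:
  assumes j: "1 \<le> j" and z: "z \<in> {0..1}"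
    and s: "0 \<le> sigma r (j - 1)" and \<rho>: "0 < r j" and \<sigma>: "sigma r j < 1"
  shows "eta_plus r j z + eta_minus r j z = 1 + sigma r j - r j * z"
    and "eta_plus r j z * eta_minus r j z = sigma r (j - 1)"
    and "1 \<le> eta_plus r j z" "0 \<le> eta_minus r j z" "eta_minus r j z < 1"
proof -
  have split: "sigma r j = sigma r (j - 1) + r j" using j by (rule sigma_pred)
  have "r j * z \<le> r j" using z \<rho> by (intro mult_left_le) auto
  then have "1 + sigma r (j - 1) \<le> 1 + sigma r j - r j * z" using split by simp
  from quadratic_roots[OF s _ this] \<rho> \<sigma> split
  show "eta_plus r j z + eta_minus r j z = 1 + sigma r j - r j * z"
    and "eta_plus r j z * eta_minus r j z = sigma r (j - 1)"
    and "1 \<le> eta_plus r j z" "0 \<le> eta_minus r j z" "eta_minus r j z < 1"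
    unfolding eta_plus_def eta_minus_def by simp_all
qed

lemma eta_plus_1:
  assumes "1 \<le> j" "sigma r (j - 1) < 1"
  shows "eta_plus r j 1 = 1"
proof -
  have "(1 + sigma r j - r j)\<^sup>2 - 4 * sigma r (j - 1) = (1 - sigma r (j - 1))\<^sup>2"
    using sigma_pred[OF assms(1), of r] by (simp add: power2_eq_square algebra_simps)
  then show ?thesis using assms sigma_pred[OF assms(1), of r] by (simp add: eta_plus_def)
qed

locale stationary_level = stationary +
  fixes j :: nat
  assumes level: "j \<in> {1..K}"
begin

definition high :: "(nat \<Rightarrow> nat) \<Rightarrow> nat" where
  "high n = (\<Sum>i=1..<j. n i)"

definition expect_pair :: "(nat \<Rightarrow> nat \<Rightarrow> real) \<Rightarrow> real" where
  "expect_pair g = expect (\<lambda>n. g (high n) (n j))"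

lemma high_eq_0_iff: "high n = 0 \<longleftrightarrow> (\<forall>i\<in>{1..<j}. n i = 0)"
  by (simp add: high_def)

lemma high_incr: "high (incr n \<kappa>) = (if \<kappa> \<in> {1..<j} then Suc (high n) else high n)"
proof -
  have "high (incr n \<kappa>) = (\<Sum>i=1..<j. n i + (if i = \<kappa> then 1 else 0))"
    unfolding high_def by (rule sum.cong) (simp_all add: incr_apply)
  then show ?thesis by (simp add: sum.distrib high_def)
qed

lemma high_decr:
  assumes "n \<kappa> \<noteq> 0"
  shows "high (decr n \<kappa>) = (if \<kappa> \<in> {1..<j} then high n - 1 else high n)"
  using high_incr[of "decr n \<kappa>" \<kappa>] incr_decr[of n \<kappa>] assms by simp

lemma serve_pair:
  assumes "n \<in> states K"
  shows "high (serve n) = high n - 1"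
    and "serve n j = (if high n = 0 then n j - 1 else n j)"
proof -
  let ?k = "next_served n"
  have least: "?k \<le> i" if "n i \<noteq> 0" for i
    unfolding next_served_def using that by (rule Least_le)
  have busy: "n ?k \<noteq> 0" if "n i \<noteq> 0" for i
    unfolding next_served_def using that by (rule LeastI)
  consider (idle) "n ?k = 0" | (high) "n ?k \<noteq> 0" "?k \<in> {1..<j}" | (low) "n ?k \<noteq> 0" "j \<le> ?k"
  proof (cases "n ?k = 0")
    case False
    then have "?k \<noteq> 0" using states_zero[OF assms] by metis
    with False that show ?thesis by (cases "?k < j") auto
  qed
  then have "high (serve n) = high n - 1 \<and> serve n j = (if high n = 0 then n j - 1 else n j)"
  proof cases
    case idle
    then have "n i = 0" for i using busy by blast
    with idle show ?thesis by (simp add: serve_def decr_self high_def)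
  next
    case high
    then have "high n \<noteq> 0" by (auto simp: high_eq_0_iff)
    with high show ?thesis by (simp add: serve_def high_decr decr_apply)
  next
    case low
    have "n i = 0" if "i \<in> {1..<j}" for i
    proof (rule ccontr)
      assume "n i \<noteq> 0"
      then have "?k \<le> i" by (rule least)
      with that low(2) show False by simp
    qed
    then have "high n = 0" by (simp add: high_eq_0_iff)
    moreover have "n j = 0" if "?k \<noteq> j"
    proof (rule ccontr)
      assume "n j \<noteq> 0"
      then have "?k \<le> j" by (rule least)
      with that low(2) show False by simp
    qed
    ultimately show ?thesis using low by (auto simp: serve_def high_decr decr_apply)
  qed
  then show "high (serve n) = high n - 1" "serve n j = (if high n = 0 then n j - 1 else n j)"
    by simp_all
qed

lemma expect_pair_balance:
  assumes g: "\<And>a b. \<bar>g a b\<bar> \<le> 1"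
  shows "(1 + sigma r j) * expect_pair g
           = sigma r (j - 1) * expect_pair (\<lambda>a b. g (Suc a) b) + r j * expect_pair (\<lambda>a b. g a (Suc b))
             + expect_pair (\<lambda>a b. if a = 0 then g 0 (b - 1) else g (a - 1) b)"
proof -
  let ?w = "\<lambda>n. g (high n) (n j)"
  have j: "1 \<le> j" "j \<le> K" using level by auto
  have arrivals: "expect (\<lambda>n. ?w (incr n \<kappa>))
      = (if \<kappa> < j then expect_pair (\<lambda>a b. g (Suc a) b)
         else if \<kappa> = j then expect_pair (\<lambda>a b. g a (Suc b)) else expect_pair g)"
    if "1 \<le> \<kappa>" for \<kappa>
    using that by (simp add: expect_pair_def high_incr incr_apply)
  have "expect (\<lambda>n. ?w (serve n)) = expect_pair (\<lambda>a b. if a = 0 then g 0 (b - 1) else g (a - 1) b)"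
    unfolding expect_pair_def expect_def by (rule infsum_cong) (simp add: serve_pair)
  moreover have "(\<Sum>\<kappa>=1..K. r \<kappa> * expect (\<lambda>n. ?w (incr n \<kappa>)))
      = sigma r (j - 1) * expect_pair (\<lambda>a b. g (Suc a) b) + r j * expect_pair (\<lambda>a b. g a (Suc b))
        + (\<Sum>\<kappa>\<in>{j<..K}. r \<kappa>) * expect_pair g"
  proof -
    have "(\<Sum>\<kappa>=1..j-1. r \<kappa> * expect (\<lambda>n. ?w (incr n \<kappa>)))
            = sigma r (j - 1) * expect_pair (\<lambda>a b. g (Suc a) b)"
      unfolding sigma_def sum_distrib_right by (rule sum.cong) (auto simp: arrivals)
    moreover have "(\<Sum>\<kappa>\<in>{j<..K}. r \<kappa> * expect (\<lambda>n. ?w (incr n \<kappa>)))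
            = (\<Sum>\<kappa>\<in>{j<..K}. r \<kappa>) * expect_pair g"
      unfolding sum_distrib_right using j by (intro sum.cong) (auto simp: arrivals)
    ultimately show ?thesis unfolding sum_split_at[OF level] using j by (simp add: arrivals)
  qed
  moreover have "sigma r K = sigma r j + (\<Sum>\<kappa>\<in>{j<..K}. r \<kappa>)"
    using sum_split_at[OF level, of r] sigma_pred[OF j(1), of r] by (simp add: sigma_def)
  ultimately show ?thesis
    using expect_balance[of ?w] g unfolding expect_pair_def[symmetric] by (simp add: algebra_simps)
qed

lemma has_sum_expect_pair:
  "(\<And>a b. \<bar>g a b\<bar> \<le> 1) \<Longrightarrow> ((\<lambda>n. g (high n) (n j) * P n) has_sum expect_pair g) (states K)"
  unfolding expect_pair_def by (rule has_sum_expect)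

lemma expect_pair_add:
  assumes "\<And>a b. \<bar>f a b\<bar> \<le> 1" "\<And>a b. \<bar>g a b\<bar> \<le> 1"
  shows "expect_pair (\<lambda>a b. f a b + g a b) = expect_pair f + expect_pair g"
  using has_sum_add[OF has_sum_expect_pair[of f] has_sum_expect_pair[of g]] assms
  unfolding expect_pair_def expect_def by (simp add: distrib_right infsumI)

lemma expect_pair_cmult: "expect_pair (\<lambda>a b. c * g a b) = c * expect_pair g"
  unfolding expect_pair_def expect_def by (simp add: infsum_cmult_right' mult.assoc)

lemma expect_pair_fibres:
  fixes \<phi> :: "nat \<Rightarrow> nat \<Rightarrow> 'b"
  assumes "\<And>a b. \<bar>g a b\<bar> \<le> 1"
  shows "((\<lambda>y. expect_pair (\<lambda>a b. if \<phi> a b = y then g a b else 0)) has_sum expect_pair g) UNIV"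
proof -
  have "(\<lambda>n. g (high n) (n j) * P n) summable_on states K"
    using has_sum_expect_pair[OF assms] by (rule has_sum_imp_summable)
  then have "((\<lambda>y. infsum (\<lambda>n. if \<phi> (high n) (n j) = y then g (high n) (n j) * P n else 0)
      (states K)) has_sum expect_pair g) UNIV"
    unfolding expect_pair_def expect_def by (rule has_sum_fibres)
  moreover have "expect_pair (\<lambda>a b. if \<phi> a b = y then g a b else 0)
      = infsum (\<lambda>n. if \<phi> (high n) (n j) = y then g (high n) (n j) * P n else 0) (states K)" for y
    unfolding expect_pair_def expect_def by (rule infsum_cong) simp
  ultimately show ?thesis by simp
qed

text \<open>Rate balance across the cut between N and N + 1 waiting clients of level j.\<close>
lemma throughput:
  "r j * expect_pair (\<lambda>a b. if b = N then 1 else 0)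
     = expect_pair (\<lambda>a b. if a = 0 \<and> b = Suc N then 1 else 0)"
proof -
  let ?L = "expect_pair (\<lambda>a b. if b \<le> N then 1 else 0)"
  have "(1 + sigma r j) * ?L = sigma r (j - 1) * ?L
          + r j * expect_pair (\<lambda>a b. if Suc b \<le> N then 1 else 0)
          + expect_pair (\<lambda>a b. if a = 0 then (if b - 1 \<le> N then 1 else 0) else if b \<le> N then 1 else 0)"
    using expect_pair_balance[of "\<lambda>a b. if b \<le> N then 1 else 0"] by simp
  moreover have "?L = expect_pair (\<lambda>a b. if Suc b \<le> N then 1 else 0)
                        + expect_pair (\<lambda>a b. if b = N then 1 else 0)"
    by (subst expect_pair_add[symmetric]) (auto intro!: arg_cong[where f = expect_pair] ext)
  moreover have "expect_pair (\<lambda>a b. if a = 0 then (if b - 1 \<le> N then 1 else 0) else if b \<le> N then 1 else 0)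
      = ?L + expect_pair (\<lambda>a b. if a = 0 \<and> b = Suc N then 1 else 0)"
    by (subst expect_pair_add[symmetric]) (auto intro!: arg_cong[where f = expect_pair] ext)
  ultimately show ?thesis using sigma_pred[of j r] level by (simp add: algebra_simps)
qed

definition level_pgf :: "real \<Rightarrow> real" where
  "level_pgf z = expect_pair (\<lambda>a b. z ^ b)"

lemma departures_pgf:
  assumes z: "z \<in> {0..1}"
  shows "expect_pair (\<lambda>a b. if a = 0 \<and> b \<noteq> 0 then z ^ (b - 1) else 0) = r j * level_pgf z"
proof -
  have zpow: "\<bar>z ^ b\<bar> \<le> 1" for b using z by (simp add: power_le_one)
  let ?A = "\<lambda>N. expect_pair (\<lambda>a b. if b = N then 1 else 0)"
  let ?d = "\<lambda>N. expect_pair (\<lambda>a b. if b = N then if a = 0 \<and> b \<noteq> 0 then z ^ (b - 1) else 0 else 0)"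
  have "(\<lambda>N. expect_pair (\<lambda>a b. if b = N then z ^ b else 0)) sums level_pgf z"
    unfolding level_pgf_def using zpow by (intro has_sum_imp_sums expect_pair_fibres)
  moreover have "expect_pair (\<lambda>a b. if b = N then z ^ b else 0) = z ^ N * ?A N" for N
    by (subst expect_pair_cmult[symmetric]) (auto intro!: arg_cong[where f = expect_pair] ext)
  ultimately have "(\<lambda>N. r j * (z ^ N * ?A N)) sums (r j * level_pgf z)"
    by (simp add: sums_mult)
  moreover have "?d (Suc N) = r j * (z ^ N * ?A N)" for N
  proof -
    have "?d (Suc N) = z ^ N * expect_pair (\<lambda>a b. if a = 0 \<and> b = Suc N then 1 else 0)"
      by (subst expect_pair_cmult[symmetric]) (auto intro!: arg_cong[where f = expect_pair] ext)
    then show ?thesis by (simp add: throughput[symmetric])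
  qed
  moreover have "(\<lambda>N. ?d (Suc N)) sums expect_pair (\<lambda>a b. if a = 0 \<and> b \<noteq> 0 then z ^ (b - 1) else 0)"
  proof -
    have "?d sums expect_pair (\<lambda>a b. if a = 0 \<and> b \<noteq> 0 then z ^ (b - 1) else 0)"
      using zpow by (intro has_sum_imp_sums expect_pair_fibres) auto
    moreover have "?d 0 = 0" by (simp add: expect_pair_def expect_def cong: if_cong)
    ultimately show ?thesis using sums_Suc_iff[of ?d] by simp
  qed
  ultimately show ?thesis by (simp add: sums_unique2)
qed


definition empty_prob :: real where
  "empty_prob = expect_pair (\<lambda>a b. if a = 0 \<and> b = 0 then 1 else 0)"

definition high_pgf :: "real \<Rightarrow> nat \<Rightarrow> real" where
  "high_pgf z m = expect_pair (\<lambda>a b. if a = m then z ^ b else 0)"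

lemma high_pgf_balance:
  assumes z: "z \<in> {0..1}"
  shows "(1 + sigma r j - r j * z) * high_pgf z m
      = sigma r (j - 1) * (if m = 0 then 0 else high_pgf z (m - 1)) + high_pgf z (Suc m)
        + (if m = 0 then empty_prob + r j * level_pgf z else 0)"
proof -
  have zpow: "\<bar>z ^ b\<bar> \<le> 1" for b using z by (simp add: power_le_one)
  let ?g = "\<lambda>a b. if a = m then z ^ b else 0"
  have "(1 + sigma r j) * high_pgf z m = sigma r (j - 1) * expect_pair (\<lambda>a b. ?g (Suc a) b)
      + r j * expect_pair (\<lambda>a b. ?g a (Suc b))
      + expect_pair (\<lambda>a b. if a = 0 then ?g 0 (b - 1) else ?g (a - 1) b)"
    unfolding high_pgf_def using zpow by (intro expect_pair_balance) simp
  moreover have "expect_pair (\<lambda>a b. ?g (Suc a) b) = (if m = 0 then 0 else high_pgf z (m - 1))"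
    by (cases m) (simp_all add: high_pgf_def expect_pair_def expect_def)
  moreover have "expect_pair (\<lambda>a b. ?g a (Suc b)) = z * high_pgf z m"
    unfolding high_pgf_def
    by (subst expect_pair_cmult[symmetric]) (auto intro!: arg_cong[where f = expect_pair] ext)
  moreover have "expect_pair (\<lambda>a b. if a = 0 then ?g 0 (b - 1) else ?g (a - 1) b)
      = high_pgf z (Suc m) + (if m = 0 then empty_prob + r j * level_pgf z else 0)"
  proof (cases "m = 0")
    case True
    have "expect_pair (\<lambda>a b. if a = 0 then ?g 0 (b - 1) else ?g (a - 1) b)
        = expect_pair (\<lambda>a b. (if a = Suc m then z ^ b else 0) + ((if a = 0 \<and> b = 0 then 1 else 0)
            + (if a = 0 \<and> b \<noteq> 0 then z ^ (b - 1) else 0)))"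
      using True by (intro arg_cong[where f = expect_pair] ext) auto
    also have "\<dots> = high_pgf z (Suc m) + (empty_prob
        + expect_pair (\<lambda>a b. if a = 0 \<and> b \<noteq> 0 then z ^ (b - 1) else 0))"
      using zpow unfolding high_pgf_def empty_prob_def by (simp add: expect_pair_add)
    finally show ?thesis using True departures_pgf[OF z] by simp
  next
    case False
    then show ?thesis unfolding high_pgf_def
      by (auto intro!: arg_cong[where f = expect_pair] ext)
  qed
  ultimately show ?thesis by (simp add: algebra_simps)
qed

lemma level_pgf_root:
  assumes z: "z \<in> {0..1}"
    and s: "0 \<le> sigma r (j - 1)" and \<rho>: "0 < r j" and \<sigma>: "sigma r j < 1"
  shows "level_pgf z * (eta_plus r j z - sigma r j) = empty_prob"
proof -
  let ?a = "eta_plus r j z" and ?b = "eta_minus r j z" and ?H = "high_pgf z"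
  have j: "1 \<le> j" using level by simp
  note roots = eta_roots[OF j z s \<rho> \<sigma>]
  note balance = high_pgf_balance[OF z, unfolded roots(1)[symmetric] roots(2)[symmetric]]
  have "?H (Suc (Suc m)) = (?a + ?b) * ?H (Suc m) - ?a * ?b * ?H m" for m
    using balance[of "Suc m"] by simp
  moreover have H_sums: "?H sums level_pgf z"
    unfolding high_pgf_def level_pgf_def using z
    by (intro has_sum_imp_sums expect_pair_fibres[where \<phi> = "\<lambda>a b. a"]) (simp add: power_le_one)
  ultimately have geo: "?H m = ?b ^ m * ?H 0" for m
    using roots(3) by (intro summable_recurrence_geometric) (auto intro: sums_summable)
  have "(\<lambda>m. ?H 0 * ?b ^ m) sums (?H 0 * (1 / (1 - ?b)))"
    using roots(4,5) by (intro sums_mult geometric_sums) simp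
  moreover have "(\<lambda>m. ?H 0 * ?b ^ m) = ?H"
    by (rule ext) (metis geo mult.commute)
  ultimately have "level_pgf z = ?H 0 / (1 - ?b)"
    using sums_unique2[OF H_sums] by simp
  then have H0: "?H 0 = (1 - ?b) * level_pgf z" using roots(5) by simp
  have "(?a + ?b) * ?H 0 = ?b * ?H 0 + empty_prob + r j * level_pgf z"
    using balance[of 0] geo[of "Suc 0"] by simp
  then have "?a * level_pgf z - ?a * ?b * level_pgf z = empty_prob + r j * level_pgf z"
    unfolding H0 by (simp add: algebra_simps)
  then show ?thesis
    unfolding roots(2) using sigma_pred[OF j, of r] by (simp add: algebra_simps)
qed

lemma level_pgf_eq:
  assumes z: "z \<in> {0..1}"
    and s: "0 \<le> sigma r (j - 1)" and \<rho>: "0 < r j" and \<sigma>: "sigma r j < 1"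
  shows "level_pgf z = (1 - sigma r j) / (eta_plus r j z - sigma r j)"
proof -
  have j: "1 \<le> j" using level by simp
  have "level_pgf 1 = 1"
    using prob by (simp add: level_pgf_def expect_pair_def expect_def infsumI)
  moreover have "eta_plus r j 1 = 1"
    using \<rho> \<sigma> sigma_pred[OF j, of r] by (intro eta_plus_1[OF j]) simp
  ultimately have "empty_prob = 1 - sigma r j"
    using level_pgf_root[of 1] s \<rho> \<sigma> by simp
  moreover have "1 \<le> eta_plus r j z" using eta_roots[OF j z s \<rho> \<sigma>] by simp
  ultimately show ?thesis using level_pgf_root[OF z s \<rho> \<sigma>] \<sigma> by (simp add: field_simps)
qed

end

theorem mainTheorem5:
  fixes K :: nat and r :: "nat \<Rightarrow> real" and P :: "(nat \<Rightarrow> nat) \<Rightarrow> real"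
    and j :: nat and z :: real
  assumes K2: "K \<ge> 2"
    and rpos: "\<forall>k\<in>{1..K}. r k > 0"
    and rlt1: "sigma r K < 1"
    and bal: "balance K r P"
    and nonneg: "\<forall>n\<in>states K. P n \<ge> 0"
    and norm: "(P has_sum 1) (states K)"
    and j: "j \<in> {2..K}"
    and z: "z \<in> {0..1}"
  shows "((\<lambda>n. P n * z ^ n j) has_sum
            ((1 - sigma r j) / (eta_plus r j z - sigma r j))) (states K)
       \<and> (1 - sigma r j) / (eta_plus r j z - sigma r j)
           = (1 - sigma r j) / r j * ((sigma r j - eta_minus r j z) / (1 - sigma r j * z))
       \<and> (1 - sigma r j) / r j * ((sigma r j - eta_minus r j z) / (1 - sigma r j * z))
           = (1 - sigma r j) / (1 - sigma r j * z)
             * ((1 - z * eta_minus r j z) / (1 - eta_minus r j z))"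
proof -
  have level: "j \<in> {1..K}" and j1: "1 \<le> j" using j by auto
  interpret stationary_level K r P j
    using bal nonneg norm level by unfold_locales auto
  have s: "0 \<le> sigma r (j - 1)" and \<rho>: "0 < r j" and \<sigma>: "sigma r j < 1"
    using sigma_bounds[OF rpos level] rpos rlt1 level by auto
  have pgf: "((\<lambda>n. P n * z ^ n j) has_sum level_pgf z) (states K)"
    using has_sum_expect_pair[of "\<lambda>a b. z ^ b"] z
    by (simp add: level_pgf_def mult.commute power_le_one)
  note roots = eta_roots[OF j1 z s \<rho> \<sigma>]
  have "eta_plus r j z * eta_minus r j z = sigma r j - r j" "r j \<le> sigma r j"
    using roots(2) sigma_pred[OF j1, of r] s by simp_all
  note closed = pgf_closed_forms[OF roots(1) this(1) roots(3,5) \<rho> this(2) \<sigma>]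
  show ?thesis
    using pgf level_pgf_eq[OF z s \<rho> \<sigma>] closed z by simp
qed

end
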